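(* Let $H=(V,E)$ be a downward-closed hypergraph (for every $e\in E$ and every $e'\subseteq e$ with $|e'|>1$, $e'\in E$), and let $F$ be a facet of $\mathrm{MP}^H$. Define $V_1^F=\{I\in V: \forall z\in\mathrm{MP}^H,\ z_I=1 \text{ implies } z\in F\}$, and for $U\subseteq V$ define $E_U=\{e\in L(V)\cup E\cup\{\varnothing\}: e\subseteq V\setminus U,\ e\cup U\in L(V)\cup E\}$ and $F_U=\{z\in F: z_I=0\ \forall I\in U\}$. If $U\subseteq V\setminus V_1^F$ is nonempty, then either $E_U$ is empty, or the projection $\operatorname{proj}_{E_U\setminus\{\varnothing\}}F_U$ is full-dimensional in $\mathbb{R}^{E_U\setminus\{\varnothing\}}$.
   Context: A hypergraph $H=(V,E)$ here has a finite vertex set $V$ and hyperedge set $E$ consisting of subsets $e\subseteq V$ with $|e|\ge 2$. Write $L(V)=\{\{I\}: I\in V\}$. The multilinear set is $\mathcal{S}^H=\{z\in\{0,1\}^{L(V)\cup E}: z_e=\prod_{I\in e}z_I\ \forall e\in E\}$, where $z_I=z_{\{I\}}$, and the multilinear polytope is $\mathrm{MP}^H=\operatorname{conv}\mathcal{S}^H$. $\operatorname{proj}_{S'}$ extracts the coordinates indexed by $S'$. *)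

theory Defs
  imports "HOL-Analysis.Analysis"
begin

text \<open>Only the coordinates in
  L(V) \<union> E are meaningful; all other coordinates are fixed to 0.\<close>

definition hypergraph :: "'v set \<Rightarrow> 'v set set \<Rightarrow> bool" where
  "hypergraph V E \<longleftrightarrow> finite V \<and> (\<forall>e\<in>E. e \<subseteq> V \<and> card e \<ge> 2)"

definition downward_closed :: "'v set set \<Rightarrow> bool" where
  "downward_closed E \<longleftrightarrow> (\<forall>e\<in>E. \<forall>e'. e' \<subseteq> e \<and> card e' > 1 \<longrightarrow> e' \<in> E)"

definition Lset :: "'v set \<Rightarrow> 'v set set" where
  "Lset V = {{I} | I. I \<in> V}"

definition multilinear_set :: "'v::finite set \<Rightarrow> 'v set set \<Rightarrow> (real ^ ('v set)) set" where
  "multilinear_set V E = {z. (\<forall>e \<in> Lset V \<union> E. z $ e \<in> {0,1})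
       \<and> (\<forall>e\<in>E. z $ e = (\<Prod>I\<in>e. z $ {I}))
       \<and> (\<forall>e. e \<notin> Lset V \<union> E \<longrightarrow> z $ e = 0)}"

definition multilinear_polytope :: "'v::finite set \<Rightarrow> 'v set set \<Rightarrow> (real ^ ('v set)) set" where
  "multilinear_polytope V E = convex hull (multilinear_set V E)"

definition V1F :: "'v::finite set \<Rightarrow> 'v set set \<Rightarrow> (real ^ ('v set)) set \<Rightarrow> 'v set" where
  "V1F V E F = {I \<in> V. \<forall>z \<in> multilinear_polytope V E. z $ {I} = 1 \<longrightarrow> z \<in> F}"

definition E_U :: "'v set \<Rightarrow> 'v set set \<Rightarrow> 'v set \<Rightarrow> 'v set set" where
  "E_U V E U = {e. e \<in> Lset V \<union> E \<union> {{}} \<and> e \<subseteq> V - U \<and> e \<union> U \<in> Lset V \<union> E}"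

definition F_U :: "(real ^ ('v::finite set)) set \<Rightarrow> 'v set \<Rightarrow> (real ^ ('v set)) set" where
  "F_U F U = {z \<in> F. \<forall>I\<in>U. z $ {I} = 0}"

text \<open>Projection onto the coordinates in S (other coordinates set to 0);
  a set is full-dimensional in R^S iff its projection has affine dimension card S.\<close>
definition proj :: "'i::finite set \<Rightarrow> real ^ 'i \<Rightarrow> real ^ 'i" where
  "proj S z = (\<chi> e. if e \<in> S then z $ e else 0)"

end

theory Submission
  imports Defs
begin

text \<open>If the projection is not full-dimensional, F_U satisfies a nontrivial affine relation
  c z = d with c supported on E_U minus the empty set. Multiplying c z - d by the product of
  the 1 - z_I over I in U and replacing monomials by coordinates (which exist by downward
  closedness) gives an affine function q that vanishes at the vertices meeting U and equals
  c z - d at the others. Hence q vanishes on F but not on the whole polytope P, so, F being a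
  facet, P \<inter> {q = 0} lies in the affine hull of F. For I in U the face {z_I = 1} of P is
  spanned by vertices meeting U, so it lies in {q = 0} and thus in F; that is, I is in V1F,
  a contradiction.\<close>

lemma prod_of_bool:
  "finite A \<Longrightarrow> (\<Prod>x\<in>A. of_bool (P x)) = (of_bool (\<forall>x\<in>A. P x) :: 'a::comm_semiring_1)"
  by (induction A rule: finite_induct) auto

lemma sum_Pow_minus_one_power:
  assumes "finite A"
  shows "(\<Sum>T\<in>Pow A. (-1::'a::ring_1) ^ card T) = of_bool (A = {})"
proof (cases "A = {}")
  case False
  then have "card {T. T \<subseteq> A \<and> {} \<subseteq> T \<and> even (card T)}
      = card {T. T \<subseteq> A \<and> {} \<subseteq> T \<and> odd (card T)}"
    using assms by (intro card_subsupersets_even_odd) auto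
  then show ?thesis
    using assms False by (simp add: sum_alternating_cancels)
qed simp

lemma face_of_convex_hull_finite:
  fixes M :: "'a::euclidean_space set"
  assumes "finite M" and "F face_of convex hull M"
  shows "F = convex hull (M \<inter> F)"
proof -
  obtain M' where "M' \<subseteq> M" and F: "F = convex hull M'"
    using face_of_convex_hull_subset[OF finite_imp_compact] assms by blast
  then have "M' \<subseteq> M \<inter> F"
    by (auto intro: hull_inc)
  then have "F \<subseteq> convex hull (M \<inter> F)"
    unfolding F by (rule hull_mono)
  moreover have "convex hull (M \<inter> F) \<subseteq> F"
    using F by (intro hull_minimal) (auto simp: convex_convex_hull)
  ultimately show ?thesis
    by blast
qed

lemma convex_hull_Int_supporting_hyperplane:
  fixes M :: "'a::euclidean_space set"
  assumes "finite M" and "\<And>x. x \<in> M \<Longrightarrow> a \<bullet> x \<le> b"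
  shows "convex hull M \<inter> {x. a \<bullet> x = b} = convex hull {x \<in> M. a \<bullet> x = b}"
proof -
  let ?G = "convex hull M \<inter> {x. a \<bullet> x = b}"
  have "convex hull M \<subseteq> {x. a \<bullet> x \<le> b}"
    using assms(2) by (intro hull_minimal) (auto simp: convex_halfspace_le)
  then have "?G face_of convex hull M"
    by (intro face_of_Int_supporting_hyperplane_le) (auto simp: convex_convex_hull)
  then have "?G = convex hull (M \<inter> ?G)"
    by (rule face_of_convex_hull_finite[OF assms(1)])
  also have "M \<inter> ?G = {x \<in> M. a \<bullet> x = b}"
    by (auto intro: hull_inc)
  finally show ?thesis .
qed

lemma facet_Int_affine_subset_affine_hull:
  fixes P :: "'a::euclidean_space set"
  assumes "F facet_of P" and "F \<subseteq> H" and "affine H" and "\<not> P \<subseteq> H"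
  shows "P \<inter> H \<subseteq> affine hull F"
proof -
  have F_sub: "F \<subseteq> P \<inter> H" and dim_F: "aff_dim F = aff_dim P - 1"
    using assms(1,2) by (auto simp: facet_of_def dest: face_of_imp_subset)
  have "affine hull (P \<inter> H) \<subseteq> H"
    using assms(3) by (intro hull_minimal) auto
  then have "affine hull (P \<inter> H) \<subset> affine hull P"
    using assms(4) hull_mono[of "P \<inter> H" P] hull_subset[of P affine] by blast
  then have "aff_dim (P \<inter> H) < aff_dim P"
    by (rule aff_dim_psubset)
  moreover have "aff_dim F \<le> aff_dim (P \<inter> H)"
    using F_sub by (rule aff_dim_subset)
  ultimately have "affine hull F = affine hull (P \<inter> H)"
    using dim_F aff_dim_eq_full_gen[OF F_sub] by simp
  then show ?thesis
    using hull_subset[of "P \<inter> H" affine] by simp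
qed

lemma affine_relation_if_aff_dim_proj_neq:
  fixes S :: "(real ^ 'i::finite) set"
  assumes "aff_dim (proj K ` S) \<noteq> int (card K)"
  obtains c d where "\<And>i. c $ i \<noteq> 0 \<Longrightarrow> i \<in> K" and "c \<noteq> 0 \<or> d \<noteq> 0"
    and "\<And>z. z \<in> S \<Longrightarrow> c \<bullet> z = d"
proof (cases "S = {}")
  case True
  show ?thesis
    by (rule that[of 0 1]) (use True in auto)
next
  case False
  define Q where "Q = proj K ` S"
  define Sp where "Sp = {x::real ^ 'i. \<forall>i. i \<notin> K \<longrightarrow> x $ i = 0}"
  obtain q0 where q0: "q0 \<in> Q"
    using False unfolding Q_def by auto
  define D where "D = (+) (- q0) ` Q"
  have "subspace Sp"
    unfolding Sp_def subspace_def by auto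
  moreover have "Q \<subseteq> Sp"
    unfolding Q_def Sp_def proj_def by auto
  ultimately have "D \<subseteq> Sp"
    using q0 unfolding D_def by (auto intro!: subspace_diff)
  moreover have "vec.dim Sp = card K"
    unfolding Sp_def by (rule dim_substandard_cart)
  then have "dim D \<noteq> dim Sp"
    using assms aff_dim_eq_dim[OF hull_inc[OF q0]] unfolding Q_def D_def by (simp add: dim_vec_eq)
  ultimately have "span D \<subset> span Sp"
    by (metis dim_span psubsetI span_mono)
  then obtain c where "c \<noteq> 0" and "c \<in> span Sp" and orth: "\<And>y. y \<in> span D \<Longrightarrow> orthogonal c y"
    using orthogonal_to_subspace_exists_gen by blast
  moreover have "span Sp = Sp"
    using \<open>subspace Sp\<close> by (simp add: span_eq_iff)
  ultimately have c_supp: "c $ i = 0" if "i \<notin> K" for i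
    using that unfolding Sp_def by auto
  show ?thesis
  proof (rule that[of c "c \<bullet> q0"])
    show "c $ i \<noteq> 0 \<Longrightarrow> i \<in> K" for i
      using c_supp by blast
    show "c \<noteq> 0 \<or> c \<bullet> q0 \<noteq> 0"
      using \<open>c \<noteq> 0\<close> by simp
    fix z assume "z \<in> S"
    then have "- q0 + proj K z \<in> span D"
      unfolding D_def Q_def by (intro span_base) auto
    then have "c \<bullet> (proj K z - q0) = 0"
      using orth by (simp add: orthogonal_def)
    then have "c \<bullet> proj K z = c \<bullet> q0"
      by (simp add: inner_diff_right)
    moreover have "c \<bullet> proj K z = c \<bullet> z"
      unfolding inner_vec_def proj_def using c_supp by (intro sum.cong) auto
    ultimately show "c \<bullet> z = c \<bullet> q0"
      by simp
  qed
qed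

lemma Lset_Un_downward_closed:
  assumes "hypergraph V E" and "downward_closed E"
    and "S \<in> Lset V \<union> E" and "T \<subseteq> S" and "T \<noteq> {}"
  shows "T \<in> Lset V \<union> E"
proof -
  have "finite S" and "S \<subseteq> V"
    using assms(1,3) unfolding hypergraph_def Lset_def by (auto intro: finite_subset)
  then have "finite T"
    using assms(4) finite_subset by blast
  show ?thesis
  proof (cases "card T = 1")
    case True
    then obtain I where "T = {I}"
      using card_1_singletonE by blast
    then show ?thesis
      using \<open>S \<subseteq> V\<close> assms(4) unfolding Lset_def by auto
  next
    case False
    then have "card T > 1"
      using \<open>finite T\<close> assms(5) by (simp add: card_gt_0_iff nat_neq_iff)
    moreover have "S \<in> E"
      using assms(3) card_mono[OF \<open>finite S\<close> assms(4)] calculation unfolding Lset_def by auto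
    ultimately show ?thesis
      using assms(2,4) unfolding downward_closed_def by auto
  qed
qed

definition ml_vertex :: "'v set \<Rightarrow> 'v set set \<Rightarrow> 'v set \<Rightarrow> real ^ ('v::finite set)" where
  "ml_vertex V E X = (\<chi> S. of_bool (S \<in> Lset V \<union> E \<and> S \<subseteq> X))"

lemma ml_vertex_singleton: "I \<in> V \<Longrightarrow> ml_vertex V E X $ {I} = of_bool (I \<in> X)"
  unfolding ml_vertex_def Lset_def by auto

lemma prod_ml_vertex_singletons:
  assumes "hypergraph V E" and "e \<in> E"
  shows "(\<Prod>I\<in>e. ml_vertex V E X $ {I}) = of_bool (e \<subseteq> X)"
proof -
  have "e \<subseteq> V" and "finite e"
    using assms unfolding hypergraph_def by (auto intro: finite_subset)
  then have "(\<Prod>I\<in>e. ml_vertex V E X $ {I}) = (\<Prod>I\<in>e. of_bool (I \<in> X))"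
    by (intro prod.cong) (auto simp: ml_vertex_singleton)
  also have "\<dots> = of_bool (e \<subseteq> X)"
    using \<open>finite e\<close> by (simp add: prod_of_bool subset_eq)
  finally show ?thesis .
qed

lemma ml_vertex_in_multilinear_set:
  assumes "hypergraph V E"
  shows "ml_vertex V E X \<in> multilinear_set V E"
  using prod_ml_vertex_singletons[OF assms]
  unfolding multilinear_set_def by (simp add: ml_vertex_def)

lemma multilinear_set_eq_ml_vertex_singletons:
  assumes "hypergraph V E" and z: "z \<in> multilinear_set V E"
  shows "z = ml_vertex V E {I \<in> V. z $ {I} = 1}"
proof -
  define X where "X = {I \<in> V. z $ {I} = 1}"
  have zero_one: "z $ S \<in> {0, 1}" if "S \<in> Lset V \<union> E" for S
    using z that unfolding multilinear_set_def by blast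
  have singletons: "z $ {I} = ml_vertex V E X $ {I}" if "I \<in> V" for I
    using zero_one[of "{I}"] that by (auto simp: ml_vertex_singleton X_def Lset_def)
  have "z $ S = ml_vertex V E X $ S" for S
  proof -
    consider I where "I \<in> V" and "S = {I}" | "S \<in> E" | "S \<notin> Lset V \<union> E"
      unfolding Lset_def by blast
    then show ?thesis
    proof cases
      case 1
      then show ?thesis
        using singletons by simp
    next
      case 2
      then have "z $ S = (\<Prod>I\<in>S. ml_vertex V E X $ {I})"
        using z assms(1) singletons unfolding multilinear_set_def hypergraph_def
        by (auto intro!: prod.cong)
      also have "\<dots> = ml_vertex V E X $ S"
        using prod_ml_vertex_singletons[OF assms(1) 2] 2 by (simp add: ml_vertex_def)
      finally show ?thesis .
    next
      case 3
      then show ?thesis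
        using z unfolding multilinear_set_def ml_vertex_def by auto
    qed
  qed
  then have "z = ml_vertex V E X"
    by (simp add: vec_eq_iff)
  then show ?thesis
    unfolding X_def .
qed

lemma multilinear_set_eq_ml_vertex_image:
  assumes "hypergraph V E"
  shows "multilinear_set V E = ml_vertex V E ` Pow V"
proof
  show "multilinear_set V E \<subseteq> ml_vertex V E ` Pow V"
  proof
    fix z assume z: "z \<in> multilinear_set V E"
    have "{I \<in> V. z $ {I} = 1} \<in> Pow V"
      by blast
    with multilinear_set_eq_ml_vertex_singletons[OF assms z] show "z \<in> ml_vertex V E ` Pow V"
      by (rule image_eqI)
  qed
  show "ml_vertex V E ` Pow V \<subseteq> multilinear_set V E"
    using ml_vertex_in_multilinear_set[OF assms] by blast
qed

lemma multilinear_polytope_eq_convex_hull_ml_vertex: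
  "hypergraph V E \<Longrightarrow> multilinear_polytope V E = convex hull (ml_vertex V E ` Pow V)"
  by (simp add: multilinear_polytope_def multilinear_set_eq_ml_vertex_image)

lemma ml_vertex_in_multilinear_polytope:
  assumes "hypergraph V E" and "X \<subseteq> V"
  shows "ml_vertex V E X \<in> multilinear_polytope V E"
  unfolding multilinear_polytope_eq_convex_hull_ml_vertex[OF assms(1)]
  using assms(2) by (intro hull_inc) blast

lemma face_of_multilinear_polytope_subset:
  assumes "hypergraph V E" and "F face_of multilinear_polytope V E" and "convex H"
    and "\<And>X. X \<subseteq> V \<Longrightarrow> ml_vertex V E X \<in> F \<Longrightarrow> ml_vertex V E X \<in> H"
  shows "F \<subseteq> H"
proof -
  have "F = convex hull (ml_vertex V E ` Pow V \<inter> F)"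
    using assms(2) multilinear_polytope_eq_convex_hull_ml_vertex[OF assms(1)]
    by (intro face_of_convex_hull_finite) simp_all
  also have "\<dots> \<subseteq> H"
    using assms(3,4) by (intro hull_minimal) auto
  finally show ?thesis .
qed

lemma multilinear_polytope_coordinate_one_subset:
  fixes V :: "'v::finite set"
  assumes "hypergraph V E" and "I \<in> V" and "convex H"
    and "\<And>X. X \<subseteq> V \<Longrightarrow> I \<in> X \<Longrightarrow> ml_vertex V E X \<in> H"
    and "z \<in> multilinear_polytope V E" and "z $ {I} = 1"
  shows "z \<in> H"
proof -
  let ?M = "ml_vertex V E ` Pow V" and ?a = "axis {I} (1::real)"
  have coordinate: "?a \<bullet> x = x $ {I}" for x :: "real ^ ('v set)"
    by (simp add: inner_axis')
  have "z \<in> convex hull ?M \<inter> {x. ?a \<bullet> x = 1}"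
    using assms(5,6) multilinear_polytope_eq_convex_hull_ml_vertex[OF assms(1)] coordinate
    by simp
  also have "\<dots> = convex hull {x \<in> ?M. ?a \<bullet> x = 1}"
    by (rule convex_hull_Int_supporting_hyperplane) (auto simp: coordinate ml_vertex_singleton[OF assms(2)])
  also have "\<dots> \<subseteq> H"
    using assms(3,4) by (intro hull_minimal) (auto simp: coordinate ml_vertex_singleton[OF assms(2)])
  finally show ?thesis .
qed

lemma mem_V1F_if_facet_subset_affine:
  fixes V :: "'v::finite set"
  assumes "hypergraph V E" and "F facet_of multilinear_polytope V E"
    and "affine H" and "F \<subseteq> H" and "\<not> multilinear_polytope V E \<subseteq> H"
    and "I \<in> V" and "\<And>X. X \<subseteq> V \<Longrightarrow> I \<in> X \<Longrightarrow> ml_vertex V E X \<in> H"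
  shows "I \<in> V1F V E F"
  unfolding V1F_def
proof (intro CollectI conjI ballI impI assms(6))
  let ?P = "multilinear_polytope V E"
  fix z assume "z \<in> ?P" and "z $ {I} = 1"
  then have "z \<in> H"
    by (intro multilinear_polytope_coordinate_one_subset[OF assms(1,6) affine_imp_convex[OF assms(3)]
          assms(7)])
  then have "z \<in> affine hull F \<inter> ?P"
    using facet_Int_affine_subset_affine_hull[OF assms(2,4,3,5)] \<open>z \<in> ?P\<close> by blast
  moreover have "F = affine hull F \<inter> ?P"
    using facet_of_imp_face_of[OF assms(2)] convex_convex_hull
    by (intro face_of_imp_eq_affine_Int) (simp_all add: multilinear_polytope_def)
  ultimately show "z \<in> F"
    by blast
qed

lemma ml_vertex_in_F_U:
  assumes "ml_vertex V E X \<in> F" and "U \<subseteq> V" and "U \<inter> X = {}"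
  shows "ml_vertex V E X \<in> F_U F U"
proof -
  have "ml_vertex V E X $ {I} = 0" if "I \<in> U" for I
  proof -
    have "I \<in> V" and "I \<notin> X"
      using that assms(2,3) by blast+
    then show ?thesis
      by (simp add: ml_vertex_singleton)
  qed
  then show ?thesis
    using assms(1) unfolding F_U_def by blast
qed

text \<open>The coordinate z $ S stands for the monomial of the variables in S, the empty monomial
  being 1. The linearized product is (c z - d) times the product of the 1 - z_I over I in U,
  expanded with each monomial replaced by its coordinate.\<close>
definition monomial :: "real ^ ('v::finite set) \<Rightarrow> 'v set \<Rightarrow> real" where
  "monomial z S = (if S = {} then 1 else z $ S)"

definition linearized_product ::
    "'v set \<Rightarrow> real ^ ('v::finite set) \<Rightarrow> real \<Rightarrow> real ^ ('v set) \<Rightarrow> real" where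
  "linearized_product U c d z =
     (\<Sum>T\<in>Pow U. (-1) ^ card T * ((\<Sum>e\<in>UNIV. c $ e * monomial z (e \<union> T)) - d * monomial z T))"

lemma monomial_ml_vertex:
  "S \<in> Lset V \<union> E \<union> {{}} \<Longrightarrow> monomial (ml_vertex V E X) S = of_bool (S \<subseteq> X)"
  unfolding monomial_def ml_vertex_def by auto

lemma affine_linearized_product_zeros: "affine {z. linearized_product U c d z = 0}"
proof -
  have "linearized_product U c d (u *\<^sub>R x + v *\<^sub>R y)
      = u * linearized_product U c d x + v * linearized_product U c d y" if "u + v = 1" for u v x y
  proof -
    have "monomial (u *\<^sub>R x + v *\<^sub>R y) S = u * monomial x S + v * monomial y S" for S
      using that unfolding monomial_def by auto
    then show ?thesis
      unfolding linearized_product_def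
      by (simp add: algebra_simps sum.distrib sum_subtractf sum_distrib_left)
  qed
  then show ?thesis
    unfolding affine_def by auto
qed

lemma inner_ml_vertex:
  assumes "\<And>e. c $ e \<noteq> 0 \<Longrightarrow> e \<in> Lset V \<union> E"
  shows "c \<bullet> ml_vertex V E X = (\<Sum>e\<in>UNIV. c $ e * of_bool (e \<subseteq> X))"
  unfolding inner_vec_def ml_vertex_def using assms by (intro sum.cong) auto

lemma linearized_product_ml_vertex:
  assumes "hypergraph V E" and "downward_closed E" and "U \<in> Lset V \<union> E"
    and "\<And>e. c $ e \<noteq> 0 \<Longrightarrow> e \<noteq> {} \<and> e \<union> U \<in> Lset V \<union> E"
  shows "linearized_product U c d (ml_vertex V E X)
    = of_bool (U \<inter> X = {}) * (c \<bullet> ml_vertex V E X - d)"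
proof -
  let ?K = "Lset V \<union> E" and ?x = "ml_vertex V E X"
  have closed: "T \<in> ?K \<union> {{}}" if "S \<in> ?K" and "T \<subseteq> S" for S T
    using Lset_Un_downward_closed[OF assms(1,2) that] by blast
  have c_K: "c $ e \<noteq> 0 \<Longrightarrow> e \<in> ?K" for e
    using assms(4) closed[of _ e] by blast
  have "linearized_product U c d ?x
      = (\<Sum>T\<in>Pow U. of_bool (T \<subseteq> X) * (-1) ^ card T * (c \<bullet> ?x - d))"
    unfolding linearized_product_def
  proof (rule sum.cong[OF refl])
    fix T assume "T \<in> Pow U"
    have summand: "c $ e * monomial ?x (e \<union> T) = of_bool (T \<subseteq> X) * (c $ e * of_bool (e \<subseteq> X))"
      for e
    proof (cases "c $ e = 0")
      case False
      then have "e \<union> T \<in> ?K \<union> {{}}"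
        using assms(4) closed[of "e \<union> U" "e \<union> T"] \<open>T \<in> Pow U\<close> by blast
      then have "monomial ?x (e \<union> T) = of_bool (e \<subseteq> X \<and> T \<subseteq> X)"
        by (simp add: monomial_ml_vertex)
      then show ?thesis
        by (simp add: of_bool_conj mult_ac)
    qed simp
    have "(\<Sum>e\<in>UNIV. c $ e * monomial ?x (e \<union> T))
        = (\<Sum>e\<in>UNIV. of_bool (T \<subseteq> X) * (c $ e * of_bool (e \<subseteq> X)))"
      by (rule sum.cong[OF refl summand])
    also have "\<dots> = of_bool (T \<subseteq> X) * (\<Sum>e\<in>UNIV. c $ e * of_bool (e \<subseteq> X))"
      by (rule sum_distrib_left[symmetric])
    also have "\<dots> = of_bool (T \<subseteq> X) * (c \<bullet> ?x)"
      using inner_ml_vertex[OF c_K] by simp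
    finally have "(\<Sum>e\<in>UNIV. c $ e * monomial ?x (e \<union> T)) = of_bool (T \<subseteq> X) * (c \<bullet> ?x)" .
    moreover have "monomial ?x T = of_bool (T \<subseteq> X)"
      using closed[OF assms(3)] \<open>T \<in> Pow U\<close> by (simp add: monomial_ml_vertex)
    ultimately show "(-1) ^ card T * ((\<Sum>e\<in>UNIV. c $ e * monomial ?x (e \<union> T)) - d * monomial ?x T)
        = of_bool (T \<subseteq> X) * (-1) ^ card T * (c \<bullet> ?x - d)"
      by (simp add: algebra_simps)
  qed
  also have "\<dots> = (\<Sum>T\<in>{T \<in> Pow U. T \<subseteq> X}. (-1) ^ card T * (c \<bullet> ?x - d))"
    by (subst sum.inter_filter) (auto intro!: sum.cong)
  also have "{T \<in> Pow U. T \<subseteq> X} = Pow (U \<inter> X)"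
    by auto
  also have "(\<Sum>T\<in>Pow (U \<inter> X). (-1) ^ card T * (c \<bullet> ?x - d))
      = (\<Sum>T\<in>Pow (U \<inter> X). (-1) ^ card T) * (c \<bullet> ?x - d)"
    by (rule sum_distrib_right[symmetric])
  also have "\<dots> = of_bool (U \<inter> X = {}) * (c \<bullet> ?x - d)"
    by (simp only: sum_Pow_minus_one_power[OF finite])
  finally show ?thesis .
qed

lemma affine_relation_fails_at_ml_vertex:
  assumes "hypergraph V E"
    and "\<And>e. c $ e \<noteq> 0 \<Longrightarrow> e \<noteq> {} \<and> e \<in> Lset V \<union> E \<and> e \<inter> U = {}"
    and "c \<noteq> 0 \<or> d \<noteq> 0"
  obtains X where "X \<subseteq> V" and "U \<inter> X = {}" and "c \<bullet> ml_vertex V E X \<noteq> d"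
proof -
  have inner: "c \<bullet> ml_vertex V E X = (\<Sum>e\<in>UNIV. c $ e * of_bool (e \<subseteq> X))" for X
    by (rule inner_ml_vertex) (use assms(2) in blast)
  show ?thesis
  proof (cases "d = 0")
    case False
    have "c \<bullet> ml_vertex V E {} = (\<Sum>e\<in>UNIV. if e = {} then c $ e else 0)"
      unfolding inner by (intro sum.cong) auto
    also have "\<dots> = c $ {}"
      by simp
    also have "\<dots> = 0"
      using assms(2) by blast
    finally show ?thesis
      using that[of "{}"] False by simp
  next
    case True
    then obtain e where "c $ e \<noteq> 0"
      using assms(3) by (metis vec_eq_iff zero_index)
    then obtain e0 where "c $ e0 \<noteq> 0"
      and minimal: "\<And>e. c $ e \<noteq> 0 \<Longrightarrow> e \<subseteq> e0 \<Longrightarrow> e = e0"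
      using finite_has_minimal[of "{e. c $ e \<noteq> 0}"] by fastforce
    have "c \<bullet> ml_vertex V E e0 = (\<Sum>e\<in>UNIV. if e = e0 then c $ e0 else 0)"
      unfolding inner using minimal by (intro sum.cong) auto
    also have "\<dots> = c $ e0"
      by simp
    finally have "c \<bullet> ml_vertex V E e0 \<noteq> d"
      using True \<open>c $ e0 \<noteq> 0\<close> by simp
    moreover have "e0 \<subseteq> V" and "U \<inter> e0 = {}"
      using assms(1) assms(2)[OF \<open>c $ e0 \<noteq> 0\<close>] unfolding hypergraph_def Lset_def by auto
    ultimately show ?thesis
      using that by blast
  qed
qed

lemma ml_vertex_linearized_product_eq_0_iff:
  assumes "hypergraph V E" and "downward_closed E" and "U \<noteq> {}" and "E_U V E U \<noteq> {}"
    and "\<And>e. c $ e \<noteq> 0 \<Longrightarrow> e \<in> E_U V E U - {{}}"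
  shows "linearized_product U c d (ml_vertex V E X) = 0
    \<longleftrightarrow> U \<inter> X \<noteq> {} \<or> c \<bullet> ml_vertex V E X = d"
proof -
  obtain e where "e \<in> E_U V E U"
    using assms(4) by blast
  then have "e \<union> U \<in> Lset V \<union> E"
    unfolding E_U_def by blast
  then have "U \<in> Lset V \<union> E"
    using Lset_Un_downward_closed[OF assms(1,2)] assms(3) by blast
  moreover have "e \<noteq> {} \<and> e \<union> U \<in> Lset V \<union> E" if "c $ e \<noteq> 0" for e
    using assms(5)[OF that] unfolding E_U_def by auto
  ultimately have "linearized_product U c d (ml_vertex V E X)
      = of_bool (U \<inter> X = {}) * (c \<bullet> ml_vertex V E X - d)"
    by (rule linearized_product_ml_vertex[OF assms(1,2)])
  then show ?thesis
    by simp
qed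

lemma face_subset_linearized_product_zeros:
  assumes "hypergraph V E" and "downward_closed E" and "U \<noteq> {}" and "E_U V E U \<noteq> {}"
    and "\<And>e. c $ e \<noteq> 0 \<Longrightarrow> e \<in> E_U V E U - {{}}"
    and "U \<subseteq> V" and "F face_of multilinear_polytope V E"
    and "\<And>z. z \<in> F_U F U \<Longrightarrow> c \<bullet> z = d"
  shows "F \<subseteq> {z. linearized_product U c d z = 0}"
proof (rule face_of_multilinear_polytope_subset[OF assms(1,7)])
  show "convex {z. linearized_product U c d z = 0}"
    by (rule affine_imp_convex[OF affine_linearized_product_zeros])
  fix X assume "X \<subseteq> V" and "ml_vertex V E X \<in> F"
  show "ml_vertex V E X \<in> {z. linearized_product U c d z = 0}"
  proof (cases "U \<inter> X = {}")
    case True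
    then have "ml_vertex V E X \<in> F_U F U"
      by (rule ml_vertex_in_F_U[OF \<open>ml_vertex V E X \<in> F\<close> assms(6)])
    then show ?thesis
      by (simp add: ml_vertex_linearized_product_eq_0_iff[OF assms(1-5)] assms(8))
  qed (simp add: ml_vertex_linearized_product_eq_0_iff[OF assms(1-5)])
qed

lemma multilinear_polytope_not_subset_linearized_product_zeros:
  assumes "hypergraph V E" and "downward_closed E" and "U \<noteq> {}" and "E_U V E U \<noteq> {}"
    and "\<And>e. c $ e \<noteq> 0 \<Longrightarrow> e \<in> E_U V E U - {{}}" and "c \<noteq> 0 \<or> d \<noteq> 0"
  shows "\<not> multilinear_polytope V E \<subseteq> {z. linearized_product U c d z = 0}"
proof -
  have "e \<noteq> {} \<and> e \<in> Lset V \<union> E \<and> e \<inter> U = {}" if "c $ e \<noteq> 0" for e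
    using assms(5)[OF that] unfolding E_U_def by auto
  then obtain X where "X \<subseteq> V" and "U \<inter> X = {}" and "c \<bullet> ml_vertex V E X \<noteq> d"
    using assms(6) by (rule affine_relation_fails_at_ml_vertex[OF assms(1)]) blast
  then have "linearized_product U c d (ml_vertex V E X) \<noteq> 0"
    by (simp add: ml_vertex_linearized_product_eq_0_iff[OF assms(1-5)])
  then show ?thesis
    using ml_vertex_in_multilinear_polytope[OF assms(1) \<open>X \<subseteq> V\<close>] by blast
qed

theorem lemma6p1:
  fixes V :: "'v::finite set" and E :: "'v set set"
    and F :: "(real ^ ('v set)) set" and U :: "'v set"
  assumes "hypergraph V E"
    and "downward_closed E"
    and "F facet_of multilinear_polytope V E"
    and "U \<subseteq> V - V1F V E F"
    and "U \<noteq> {}"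
  shows "E_U V E U = {} \<or>
         aff_dim (proj (E_U V E U - {{}}) ` F_U F U) = int (card (E_U V E U - {{}}))"
proof (rule ccontr)
  assume "\<not> ?thesis"
  then have E_U: "E_U V E U \<noteq> {}"
    and not_full: "aff_dim (proj (E_U V E U - {{}}) ` F_U F U) \<noteq> int (card (E_U V E U - {{}}))"
    by auto
  obtain c d where supp: "\<And>e. c $ e \<noteq> 0 \<Longrightarrow> e \<in> E_U V E U - {{}}"
    and nontrivial: "c \<noteq> 0 \<or> d \<noteq> 0" and relation: "\<And>z. z \<in> F_U F U \<Longrightarrow> c \<bullet> z = d"
    using not_full by (rule affine_relation_if_aff_dim_proj_neq) blast
  have "U \<subseteq> V"
    using assms(4) by blast
  obtain I where "I \<in> U"
    using assms(5) by blast
  let ?H = "{z. linearized_product U c d z = 0}"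
  have "I \<in> V1F V E F"
  proof (rule mem_V1F_if_facet_subset_affine[OF assms(1,3) affine_linearized_product_zeros])
    show "F \<subseteq> ?H"
      by (rule face_subset_linearized_product_zeros[OF assms(1,2,5) E_U supp \<open>U \<subseteq> V\<close>
            facet_of_imp_face_of[OF assms(3)]]) (simp_all add: relation)
    show "\<not> multilinear_polytope V E \<subseteq> ?H"
      by (rule multilinear_polytope_not_subset_linearized_product_zeros[OF assms(1,2,5) E_U supp])
        (use nontrivial in simp_all)
    show "I \<in> V"
      using \<open>I \<in> U\<close> \<open>U \<subseteq> V\<close> by blast
    show "ml_vertex V E X \<in> ?H" if "X \<subseteq> V" and "I \<in> X" for X
      using that \<open>I \<in> U\<close> by (auto simp: ml_vertex_linearized_product_eq_0_iff[OF assms(1,2,5) E_U supp])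
  qed
  then show False
    using \<open>I \<in> U\<close> assms(4) by blast
qed

end
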